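(* Let $\lambda$ and $g$ be as in the context. Let $b^{(1)}\in[0,c^{(1)}]$ be the point with $g(b^{(1)})=0$ and set $b^{(2)}=b^{(1)}/\lambda$. Then $g'(b^{(2)})=-1$.
   Context: There is a unique constant $\lambda=2.5029\ldots$ and a unique infinitely (period-doubling) renormalizable analytic unimodal map $g:[-1,1]\to[-1,1]$ solving $g(x)=-\lambda\, g^{2}(-x/\lambda)$ for $-1\le x\le1$ ($g^2=g\circ g$). Unimodal means: $-1$ is the unique fixed point with positive multiplier, $g(1)=-1$, and $g$ has a unique maximum at an interior nondegenerate critical point $c^{(0)}$. Moreover $g$ is analytic near $[-1,1]$, even, concave on $[-c^{(1)},c^{(1)}]$ where $c^{(1)}=g(c^{(0)})$, satisfies $g(c^{(1)})=-c^{(1)}/\lambda$, $g'(c^{(1)})=-\lambda$, and has negative Schwarzian derivative. *)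

theory Defs
  imports "HOL-Analysis.Analysis"
begin

definition real_analytic_near :: "(real \<Rightarrow> real) \<Rightarrow> real set \<Rightarrow> bool" where
  "real_analytic_near g S \<longleftrightarrow>
     (\<exists>U. open U \<and> S \<subseteq> U \<and>
        (\<forall>x\<in>U. \<exists>r>0. \<exists>a::nat \<Rightarrow> real.
            \<forall>y. \<bar>y - x\<bar> < r \<longrightarrow> (\<lambda>n. a n * (y - x) ^ n) sums g y))"

definition schwarzian :: "(real \<Rightarrow> real) \<Rightarrow> real \<Rightarrow> real" where
  "schwarzian g x =
     (deriv (deriv (deriv g)) x) / deriv g x
     - 3 / 2 * ((deriv (deriv g) x) / deriv g x) ^ 2"

end

theory Submission
  imports Defs
begin

text \<open>By evenness the critical point is 0, and by concavity g decreases strictly on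
  [0, c1], where c1 = g 0.  Evaluating the renormalization equation at b1 gives
  g (g b2) = g b1 = 0, hence g b2 = b1 by injectivity, and the chain rule gives
  g' b1 = - g' b1 * g' b2.  Finally g' b1 \<noteq> 0: a concave function with a vanishing
  derivative at b1 would have its maximum there, not at 0.\<close>

lemma real_analytic_near_has_deriv:
  assumes "real_analytic_near g S" "x \<in> S"
  shows "(g has_real_derivative deriv g x) (at x)"
proof -
  obtain r a where "r > 0" and series: "\<forall>y. \<bar>y - x\<bar> < r \<longrightarrow> (\<lambda>n. a n * (y - x) ^ n) sums g y"
    using assms unfolding real_analytic_near_def by blast
  have "summable (\<lambda>n. a n * (r/2) ^ n)"
    using series[rule_format, of "x + r/2"] \<open>r > 0\<close> by (auto simp: sums_iff)
  then have outer: "DERIV (\<lambda>h. \<Sum>n. a n * h^n) ((\<lambda>y. y - x) x) :> (\<Sum>n. diffs a n * 0^n)"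
    unfolding diff_self by (rule termdiffs_strong) (use \<open>r > 0\<close> in auto)
  have inner: "((\<lambda>y. y - x) has_real_derivative 1) (at x)"
    by (auto intro!: derivative_eq_intros)
  have "((\<lambda>y. \<Sum>n. a n * (y - x)^n) has_real_derivative (\<Sum>n. diffs a n * 0^n)) (at x)"
    using DERIV_chain2[of "\<lambda>h. \<Sum>n. a n * h^n" _ "\<lambda>y. y - x" x, OF outer inner] by simp
  then have "(g has_real_derivative (\<Sum>n. diffs a n * 0^n)) (at x)"
    by (rule has_field_derivative_transform_within_open[of _ _ _ "ball x r"])
       (use \<open>r > 0\<close> series in \<open>auto simp: dist_real_def sums_iff abs_minus_commute\<close>)
  then show ?thesis
    using DERIV_imp_deriv by metis
qed

lemma concave_on_strict_antimono_right_of_max: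
  fixes g :: "real \<Rightarrow> real"
  assumes "concave_on I g" "x0 \<in> I" and max: "\<forall>z\<in>I. z \<noteq> x0 \<longrightarrow> g z < g x0"
  shows "strict_antimono_on (I \<inter> {x0..}) g"
proof (rule monotone_onI)
  fix x y assume "x \<in> I \<inter> {x0..}" "y \<in> I \<inter> {x0..}" "x < y"
  define t where "t = (x - x0) / (y - x0)"
  have t: "0 \<le> t" "t < 1" and "t * (y - x0) = x - x0"
    using \<open>x \<in> I \<inter> {x0..}\<close> \<open>x < y\<close> by (auto simp: t_def field_simps)
  then have x_eq: "x = (1 - t) * x0 + t * y"
    by (simp add: algebra_simps)
  have "(1 - t) * g x0 + t * g y \<le> g x"
    using concave_onD[OF assms(1), of t x0 y] t x_eq \<open>x0 \<in> I\<close> \<open>y \<in> I \<inter> {x0..}\<close> by auto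
  moreover have "g y < g x0"
    using max \<open>x \<in> I \<inter> {x0..}\<close> \<open>y \<in> I \<inter> {x0..}\<close> \<open>x < y\<close> by auto
  then have "(1 - t) * g y < (1 - t) * g x0"
    using t by simp
  ultimately show "g y < g x"
    by (simp add: algebra_simps)
qed

lemma concave_on_critical_point_is_max:
  fixes f :: "real \<Rightarrow> real"
  assumes "concave_on A f" "connected A" "c \<in> interior A" "x \<in> A"
    and "(f has_real_derivative 0) (at c)"
  shows "f x \<le> f c"
proof -
  have "convex_on A (\<lambda>x. - f x)"
    using assms(1) by (simp add: concave_on_def)
  moreover have "((\<lambda>x. - f x) has_real_derivative 0) (at c within A)"
    using DERIV_minus[OF assms(5)] by (simp add: has_field_derivative_at_within)
  ultimately show ?thesis
    using convex_on_imp_above_tangent[of A "\<lambda>x. - f x" c x 0] assms(2-4) by simp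
qed

lemma deriv_renormalization_equation:
  fixes g :: "real \<Rightarrow> real"
  assumes "open U" "b \<in> U" and eq: "\<forall>x\<in>U. g x = - lam * g (g (x / lam))" and "lam \<noteq> 0"
    and "(g has_real_derivative deriv g (b / lam)) (at (b / lam))"
    and "(g has_real_derivative deriv g (g (b / lam))) (at (g (b / lam)))"
    and "(g has_real_derivative deriv g b) (at b)"
  shows "deriv g b = - deriv g (g (b / lam)) * deriv g (b / lam)"
proof -
  have "((\<lambda>x. x / lam) has_real_derivative 1 / lam) (at b)"
    using \<open>lam \<noteq> 0\<close> by (auto intro!: derivative_eq_intros)
  from DERIV_chain2[of g _ "\<lambda>x. x / lam" b, OF assms(5) this]
  have "((\<lambda>x. g (x / lam)) has_real_derivative deriv g (b / lam) / lam) (at b)"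
    by simp
  from DERIV_chain2[of g _ "\<lambda>x. g (x / lam)" b, OF assms(6) this]
  have "((\<lambda>x. - lam * g (g (x / lam))) has_real_derivative
          - deriv g (g (b / lam)) * deriv g (b / lam)) (at b)"
    using DERIV_cmult[of _ _ b UNIV "- lam"] \<open>lam \<noteq> 0\<close> by fastforce
  then have "(g has_real_derivative - deriv g (g (b / lam)) * deriv g (b / lam)) (at b)"
    by (rule has_field_derivative_transform_within_open[OF _ assms(1,2)]) (use eq in auto)
  then show ?thesis
    using DERIV_unique[OF assms(7)] by blast
qed

lemma renormalization_equation_even:
  fixes g :: "real \<Rightarrow> real"
  assumes "1 \<le> lam" and even: "\<forall>x\<in>{-1..1}. g (- x) = g x"
    and eq: "\<forall>x\<in>{-1..1}. g x = - lam * g (g (- x / lam))" and "x \<in> {-1..1}"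
  shows "g x = - lam * g (g (x / lam))"
proof -
  have "x / lam \<in> {-1..1}"
    using assms(1,4) by (auto simp: divide_le_eq le_divide_eq)
  then have "g (- x / lam) = g (x / lam)"
    using even by (metis minus_divide_left)
  then show ?thesis
    using bspec[OF eq \<open>x \<in> {-1..1}\<close>] by simp
qed

theorem mainTheorem5:
  fixes g :: "real \<Rightarrow> real" and lam c0 b1 :: real
  assumes lam_bounds: "2.5029 \<le> lam" "lam < 2.503"
    and analytic: "real_analytic_near g {-1..1}"
    and maps_into: "\<forall>x\<in>{-1..1}. g x \<in> {-1..1}"
    and feigenbaum_eq: "\<forall>x\<in>{-1..1}. g x = - lam * g (g (- x / lam))"
    and fix_m1: "g (-1) = -1" "deriv g (-1) > 0"
    and fix_unique: "\<forall>x\<in>{-1..1}. g x = x \<and> deriv g x > 0 \<longrightarrow> x = -1"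
    and g_1: "g 1 = -1"
    and c0_interior: "c0 \<in> {-1<..<1}"
    and c0_max: "\<forall>x\<in>{-1..1}. x \<noteq> c0 \<longrightarrow> g x < g c0"
    and c0_nondeg: "deriv g c0 = 0" "deriv (deriv g) c0 \<noteq> 0"
    and even: "\<forall>x\<in>{-1..1}. g (- x) = g x"
    and concave: "concave_on {- g c0 .. g c0} g"
    and c1_image: "g (g c0) = - g c0 / lam"
    and c1_deriv: "deriv g (g c0) = - lam"
    and neg_schwarzian: "\<forall>x\<in>{-1..1}. deriv g x \<noteq> 0 \<longrightarrow> schwarzian g x < 0"
    and b1_mem: "b1 \<in> {0 .. g c0}"
    and b1_zero: "g b1 = 0"
  shows "deriv g (b1 / lam) = -1"
proof -
  have has_deriv: "(g has_real_derivative deriv g x) (at x)" if "x \<in> {-1..1}" for x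
    using real_analytic_near_has_deriv[OF analytic that] .
  have "c0 = 0"
    using c0_max[rule_format, of "- c0"] even[rule_format, of c0] c0_interior by fastforce
  define c1 where "c1 = g 0"
  have c1: "0 < c1" "c1 < 1"
    using b1_mem maps_into[rule_format, of 0] c0_nondeg(1) c1_deriv c1_image g_1 lam_bounds
    by (auto simp: \<open>c0 = 0\<close> c1_def less_le)
  have b1: "0 < b1" "b1 < c1"
    using b1_mem b1_zero c1_image c1 lam_bounds by (auto simp: \<open>c0 = 0\<close> c1_def less_le)
  define b2 where "b2 = b1 / lam"
  have b2: "0 < b2" "b2 < b1"
    using b1 lam_bounds by (auto simp: b2_def field_simps)
  note eq = renormalization_equation_even[of lam g, OF _ even feigenbaum_eq]
  have concave': "concave_on {-c1..c1} g"
    using concave by (simp add: \<open>c0 = 0\<close> c1_def)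
  have max': "\<forall>z\<in>{-c1..c1}. z \<noteq> 0 \<longrightarrow> g z < g 0"
    using c0_max c1 by (auto simp: \<open>c0 = 0\<close>)
  have antimono: "strict_antimono_on {0..c1} g"
    using concave_on_strict_antimono_right_of_max[OF concave' _ max'] c1
    by (simp add: Int_absorb1 flip: atLeastAtMost_def Int_atLeastAtMost)
  have "g (g b2) = g b1"
    using eq[of b1] b1 c1 b1_zero lam_bounds by (simp add: b2_def)
  moreover have "g b2 \<in> {0..c1}"
    using monotone_onD[OF antimono, of b2 b1] max'[rule_format, of b2] b1 b2 b1_zero
    by (auto simp: c1_def)
  moreover have "inj_on g {0..c1}"
    using antimono strict_antimono_iff_antimono by blast
  ultimately have "g b2 = b1"
    using b1 by (auto dest: inj_onD)
  have "deriv g b1 \<noteq> 0"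
  proof
    assume "deriv g b1 = 0"
    then have "(g has_real_derivative 0) (at b1)"
      using has_deriv[of b1] b1 c1 by simp
    then have "g 0 \<le> g b1"
      by (rule concave_on_critical_point_is_max[OF concave', rotated -1])
         (use b1 c1 in \<open>auto simp: interior_atLeastAtMost_real\<close>)
    then show False
      using b1_zero c1 by (simp add: c1_def)
  qed
  moreover have "deriv g b1 = - deriv g b1 * deriv g b2"
  proof -
    have "\<forall>x\<in>{-1<..<1}. g x = - lam * g (g (x / lam))"
      using eq lam_bounds by simp
    from deriv_renormalization_equation[OF _ _ this, of b1]
    show ?thesis
      using has_deriv[of b1] has_deriv[of b2] b1 b2 c1 lam_bounds
      by (simp add: \<open>g b2 = b1\<close> flip: b2_def)
  qed
  ultimately show ?thesis
    unfolding b2_def[symmetric] by (metis minus_mult_right mult_cancel_left1 minus_equation_iff)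
qed

end
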